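(* In $\mathsf{FOJT45}$: let $\mathcal{CS}$ be an axiomatically appropriate constant specification and $y$ an individual variable. For every finite set $X$ of individual variables with $y\notin X$, every formula $\varphi(y)$ and every justification term $t$, there is a justification term $\mathsf b(t)$ (built from $t$ using the operations of FOJT45) such that $\vdash_{\mathcal{CS}}\forall y\, t{:}_{Xy}\varphi(y)\to\mathsf b(t){:}_X\forall y\varphi(y)$.
   Context: Syntax of FOJT45: individual variables, predicate symbols, primitive connectives $\to,\bot,\forall$; justification variables $p_i$, constants $c_i$; terms $t::=p_i\mid c\mid (t\cdot t)\mid(t+t)\mid !t\mid ?t\mid\mathsf{gen}_x(t)$ (no primitive $\mathsf b$); formulas $Px_1\dots x_n\mid\bot\mid\varphi\to\varphi\mid\forall x\varphi\mid t{:}_X\varphi$ with $X$ a finite set of individual variables; free variables of $t{:}_X\psi$ are exactly those in $X$. $Xy$ denotes $X\cup\{y\}$ with $y\notin X$. Axioms of FOJT45: A1 classical first-order axioms; A2 $t{:}_{Xy}\varphi\to t{:}_X\varphi$ if $y$ not free in $\varphi$; A3 $t{:}_X\varphi\to t{:}_{Xy}\varphi$; B1 $t{:}_X\varphi\to\varphi$; B2 $t{:}_X(\varphi\to\psi)\to(s{:}_X\varphi\to[t\cdot s]{:}_X\psi)$; B3 $t{:}_X\varphi\to[t+s]{:}_X\varphi$, $s{:}_X\varphi\to[t+s]{:}_X\varphi$; B4 $t{:}_X\varphi\to!t{:}_Xt{:}_X\varphi$; B5 $t{:}_X\varphi\to\mathsf{gen}_x(t){:}_X\forall x\varphi$ if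 $x\notin X$; B6 $\neg t{:}_X\varphi\to ?t{:}_X\neg t{:}_X\varphi$; rules modus ponens and generalization. A constant specification is a set of $c{:}\psi$ with $\psi$ an axiom; axiomatically appropriate if each axiom has some constant; $\vdash_{\mathcal{CS}}$ is provability with $\mathcal{CS}$ added as axioms. *)

theory Defs
  imports Main "HOL-Library.FSet"
begin

type_synonym var = nat

datatype jterm =
    JVar nat
  | JConst nat
  | App jterm jterm
  | Plus jterm jterm
  | Bang jterm
  | Quest jterm
  | Gen var jterm

datatype fm =
    Pred nat "var list"
  | Bot
  | Imp fm fm
  | All var fm
  | Just jterm "var fset" fm

definition Neg :: "fm \<Rightarrow> fm" where "Neg \<phi> = Imp \<phi> Bot"

fun subterms :: "jterm \<Rightarrow> jterm set" where
  "subterms (JVar n) = {JVar n}"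
| "subterms (JConst n) = {JConst n}"
| "subterms (App t s) = insert (App t s) (subterms t \<union> subterms s)"
| "subterms (Plus t s) = insert (Plus t s) (subterms t \<union> subterms s)"
| "subterms (Bang t) = insert (Bang t) (subterms t)"
| "subterms (Quest t) = insert (Quest t) (subterms t)"
| "subterms (Gen x t) = insert (Gen x t) (subterms t)"

fun fv :: "fm \<Rightarrow> var set" where
  "fv (Pred P xs) = set xs"
| "fv Bot = {}"
| "fv (Imp a b) = fv a \<union> fv b"
| "fv (All x a) = fv a - {x}"
| "fv (Just t X a) = fset X"

fun subst :: "var \<Rightarrow> var \<Rightarrow> fm \<Rightarrow> fm" where
  "subst y x (Pred P xs) = Pred P (map (\<lambda>z. if z = x then y else z) xs)"
| "subst y x Bot = Bot"
| "subst y x (Imp a b) = Imp (subst y x a) (subst y x b)"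
| "subst y x (All z a) = (if z = x then All z a else All z (subst y x a))"
| "subst y x (Just t X a) =
     (if x |\<in>| X then Just t (finsert y (X |-| {|x|})) (subst y x a) else Just t X a)"

fun substitutable :: "var \<Rightarrow> var \<Rightarrow> fm \<Rightarrow> bool" where
  "substitutable y x (Pred P xs) = True"
| "substitutable y x Bot = True"
| "substitutable y x (Imp a b) = (substitutable y x a \<and> substitutable y x b)"
| "substitutable y x (All z a) =
     (x \<notin> fv (All z a) \<or> (z \<noteq> y \<and> substitutable y x a))"
| "substitutable y x (Just t X a) =
     (x |\<notin>| X \<or> (substitutable y x a \<and> (y \<in> fv a \<longrightarrow> y |\<in>| X)))"

inductive axiom :: "fm \<Rightarrow> bool" where
  A1_K: "axiom (Imp a (Imp b a))"
| A1_S: "axiom (Imp (Imp a (Imp b c)) (Imp (Imp a b) (Imp a c)))"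
| A1_DN: "axiom (Imp (Neg (Neg a)) a)"
| A1_inst: "substitutable y x a \<Longrightarrow> axiom (Imp (All x a) (subst y x a))"
| A1_dist: "x \<notin> fv a \<Longrightarrow> axiom (Imp (All x (Imp a b)) (Imp a (All x b)))"
| A2: "y |\<notin>| X \<Longrightarrow> y \<notin> fv a \<Longrightarrow> axiom (Imp (Just t (finsert y X) a) (Just t X a))"
| A3: "y |\<notin>| X \<Longrightarrow> axiom (Imp (Just t X a) (Just t (finsert y X) a))"
| B1: "axiom (Imp (Just t X a) a)"
| B2: "axiom (Imp (Just t X (Imp a b)) (Imp (Just s X a) (Just (App t s) X b)))"
| B3l: "axiom (Imp (Just t X a) (Just (Plus t s) X a))"
| B3r: "axiom (Imp (Just s X a) (Just (Plus t s) X a))"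
| B4: "axiom (Imp (Just t X a) (Just (Bang t) X (Just t X a)))"
| B5: "x |\<notin>| X \<Longrightarrow> axiom (Imp (Just t X a) (Just (Gen x t) X (All x a)))"
| B6: "axiom (Imp (Neg (Just t X a)) (Just (Quest t) X (Neg (Just t X a))))"

text \<open>A constant specification: a set of pairs (c, psi), standing for c:psi
  (i.e. c :_{} psi, with empty variable set), where psi is an axiom.\<close>
definition const_spec :: "(nat \<times> fm) set \<Rightarrow> bool" where
  "const_spec CS \<longleftrightarrow> (\<forall>(c, \<psi>) \<in> CS. axiom \<psi>)"

definition axiomatically_appropriate :: "(nat \<times> fm) set \<Rightarrow> bool" where
  "axiomatically_appropriate CS \<longleftrightarrow> const_spec CS \<and> (\<forall>\<psi>. axiom \<psi> \<longrightarrow> (\<exists>c. (c, \<psi>) \<in> CS))"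

inductive provable :: "(nat \<times> fm) set \<Rightarrow> fm \<Rightarrow> bool" where
  ax: "axiom a \<Longrightarrow> provable CS a"
| cs: "(c, a) \<in> CS \<Longrightarrow> provable CS (Just (JConst c) {||} a)"
| mp: "provable CS (Imp a b) \<Longrightarrow> provable CS a \<Longrightarrow> provable CS b"
| gen: "provable CS a \<Longrightarrow> provable CS (All x a)"

end

theory Submission
  imports Defs
begin

text \<open>Let \<chi> = \<forall>y t:_{Xy}\<phi>. Since \<not>t:_{Xy}\<phi> implies \<not>\<chi>, negative introspection (B6) and
  internalization yield a term u with \<not>t:_{Xy}\<phi> \<rightarrow> u:_{Xy}\<not>\<chi>; as y is not free in \<chi>,
  axiom A2 lets us drop y, giving \<not>t:_{Xy}\<phi> \<rightarrow> u:_X\<not>\<chi>. Contraposing, \<not>u:_X\<not>\<chi> implies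
  t:_{Xy}\<phi> and hence \<phi>; now y is not free in \<not>u:_X\<not>\<chi>, so generalization gives
  \<not>u:_X\<not>\<chi> \<rightarrow> \<forall>y\<phi>. Introspecting once more yields a term d with
  \<not>u:_X\<not>\<chi> \<rightarrow> (d\<cdot>?u):_X\<forall>y\<phi>, and \<chi> implies \<not>u:_X\<not>\<chi> by reflexivity (B1).\<close>

lemma provable_Imp_const: "provable CS b \<Longrightarrow> provable CS (Imp a b)"
  by (rule provable.mp[OF provable.ax[OF axiom.A1_K]])

lemma provable_Imp_trans:
  assumes "provable CS (Imp a b)" "provable CS (Imp b c)"
  shows "provable CS (Imp a c)"
  using provable.mp[OF provable.mp[OF provable.ax[OF axiom.A1_S] provable_Imp_const[OF assms(2)]]
      assms(1)] .

lemma provable_Imp_swap: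
  assumes "provable CS (Imp a (Imp b c))"
  shows "provable CS (Imp b (Imp a c))"
  using provable_Imp_trans[OF provable.ax[OF axiom.A1_K]
      provable.mp[OF provable.ax[OF axiom.A1_S] assms]] .

lemma provable_contrapos:
  assumes "provable CS (Imp a b)"
  shows "provable CS (Imp (Neg b) (Neg a))"
proof -
  have "provable CS (Imp (Imp b Bot) (Imp (Imp a b) (Imp a Bot)))"
    using provable_Imp_trans[OF provable.ax[OF axiom.A1_K] provable.ax[OF axiom.A1_S]] .
  then have "provable CS (Imp (Imp b Bot) (Imp a Bot))"
    using provable.mp[OF provable_Imp_swap] assms by blast
  then show ?thesis by (simp add: Neg_def)
qed

lemma provable_contrapos_Neg_left:
  "provable CS (Imp (Neg a) b) \<Longrightarrow> provable CS (Imp (Neg b) a)"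
  using provable_Imp_trans[OF provable_contrapos provable.ax[OF axiom.A1_DN]] .

lemma provable_contrapos_Neg_right:
  "provable CS (Imp a (Neg b)) \<Longrightarrow> provable CS (Imp b (Neg a))"
  unfolding Neg_def by (rule provable_Imp_swap)

lemma provable_All_elim: "provable CS (Imp (All x a) a)"
proof -
  have "subst x x a = a" "substitutable x x a"
    by (induction a) auto
  then show ?thesis
    using provable.ax[OF axiom.A1_inst[of x x a]] by simp
qed

lemma provable_Imp_All:
  assumes "x \<notin> fv a" "provable CS (Imp a b)"
  shows "provable CS (Imp a (All x b))"
  using provable.mp[OF provable.ax[OF axiom.A1_dist[OF assms(1)]] provable.gen[OF assms(2)]] .

lemma provable_Just_empty:
  assumes "axiomatically_appropriate CS" "provable CS a"
  shows "\<exists>s. provable CS (Just s {||} a)"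
  using assms(2,1)
proof induction
  case (ax a CS)
  then obtain c where "(c, a) \<in> CS"
    unfolding axiomatically_appropriate_def by blast
  then show ?case by (blast intro: provable.cs)
next
  case (cs c a CS)
  then show ?case by (blast intro: provable.cs provable.mp[OF provable.ax[OF axiom.B4]])
next
  case (mp CS a b)
  then show ?case by (blast intro: provable.mp[OF provable.mp[OF provable.ax[OF axiom.B2]]])
next
  case (gen CS a x)
  then show ?case by (blast intro: provable.mp[OF provable.ax[OF axiom.B5]])
qed

lemma provable_Just_weaken_vars:
  "provable CS (Just s {||} a) \<Longrightarrow> provable CS (Just s X a)"
proof (induction X)
  case (insert x X)
  then show ?case using provable.mp[OF provable.ax[OF axiom.A3]] by simp
qed simp

lemma provable_internalize:
  assumes "axiomatically_appropriate CS" "provable CS a"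
  shows "\<exists>s. provable CS (Just s X a)"
  using provable_Just_empty[OF assms] provable_Just_weaken_vars by blast

lemma provable_Neg_Just_imp_Just:
  assumes "axiomatically_appropriate CS" "provable CS (Imp (Neg (Just t X a)) b)"
  shows "\<exists>c. provable CS (Imp (Neg (Just t X a)) (Just (App c (Quest t)) X b))"
proof -
  obtain c where "provable CS (Just c X (Imp (Neg (Just t X a)) b))"
    using provable_internalize[OF assms] by blast
  then have "provable CS (Imp (Just (Quest t) X (Neg (Just t X a))) (Just (App c (Quest t)) X b))"
    by (rule provable.mp[OF provable.ax[OF axiom.B2]])
  then show ?thesis
    using provable_Imp_trans[OF provable.ax[OF axiom.B6]] by blast
qed

theorem mainTheorem6:
  fixes CS :: "(nat \<times> fm) set" and y :: var
  assumes "axiomatically_appropriate CS"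
  shows "\<forall>X \<phi> t. y |\<notin>| X \<longrightarrow>
           (\<exists>b. t \<in> subterms b \<and>
                provable CS (Imp (All y (Just t (finsert y X) \<phi>)) (Just b X (All y \<phi>))))"
proof (intro allI impI)
  fix X \<phi> t assume y_notin_X: "y |\<notin>| X"
  define \<chi> where "\<chi> = All y (Just t (finsert y X) \<phi>)"
  obtain c where "provable CS (Imp (Neg (Just t (finsert y X) \<phi>))
      (Just (App c (Quest t)) (finsert y X) (Neg \<chi>)))"
    using provable_Neg_Just_imp_Just[OF assms provable_contrapos[OF provable_All_elim]]
    unfolding \<chi>_def by blast
  moreover define u where "u = App c (Quest t)"
  ultimately have "provable CS (Imp (Neg (Just t (finsert y X) \<phi>)) (Just u X (Neg \<chi>)))"
    using provable_Imp_trans provable.ax[OF axiom.A2[OF y_notin_X]]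
    by (auto simp: \<chi>_def Neg_def)
  then have "provable CS (Imp (Neg (Just u X (Neg \<chi>))) (All y \<phi>))"
    using provable_Imp_All y_notin_X
      provable_Imp_trans[OF provable_contrapos_Neg_left provable.ax[OF axiom.B1]]
    by (simp add: Neg_def)
  then obtain d where "provable CS (Imp (Neg (Just u X (Neg \<chi>))) (Just (App d (Quest u)) X (All y \<phi>)))"
    using provable_Neg_Just_imp_Just[OF assms] by blast
  then have "provable CS (Imp \<chi> (Just (App d (Quest u)) X (All y \<phi>)))"
    using provable_Imp_trans[OF provable_contrapos_Neg_right[OF provable.ax[OF axiom.B1]]] by blast
  moreover have "t \<in> subterms (App d (Quest u))"
    by (cases t) (simp_all add: u_def)
  ultimately show "\<exists>b. t \<in> subterms b \<and>
      provable CS (Imp (All y (Just t (finsert y X) \<phi>)) (Just b X (All y \<phi>)))"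
    unfolding \<chi>_def by blast
qed

end
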